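(* Let $\mathbf{p}$ be a list of explainable predicate constants and let $R$ be an L-rule (with respect to $\mathbf{p}$). Then the conjunction $CC$ of completeness constraints for $\mathbf{p}$ intuitionistically entails $\mathrm{tr}_l[R]\leftrightarrow\mathrm{tr}_d[R]$.
   Context: An L-rule is a causal rule $L\Leftarrow G$, where $G$ is a first-order formula without $\to$ and $L$ is a literal $p(\mathbf{t})$ or $\neg p(\mathbf{t})$ with $p\in\mathbf{p}$. For each $p\in\mathbf{p}$, $\widehat p$ is a new predicate constant of the same arity. $\mathrm{tr}_l[p(\mathbf{t})\Leftarrow G]=\widetilde\forall(\neg\neg G\to p(\mathbf{t}))$ and $\mathrm{tr}_l[\neg p(\mathbf{t})\Leftarrow G]=\widetilde\forall(\neg\neg G\to\widehat p(\mathbf{t}))$ ($\widetilde\forall$ = universal closure). Viewing the L-rule as a D-rule, $\mathrm{tr}_d[p(\mathbf{t})\Leftarrow G]=\widetilde\forall(\neg\neg G\land(\widehat p(\mathbf{t})\lor\neg\widehat p(\mathbf{t}))\to p(\mathbf{t}))$ and $\mathrm{tr}_d[\neg p(\mathbf{t})\Leftarrow G]=\widetilde\forall(\neg\neg G\land(p(\mathbf{t})\lor\neg p(\mathbf{t}))\to \widehat p(\mathbf{t}))$. $CC$ is the conjunction over $p\in\mathbf{p}$ of $\forall\mathbf{x}\neg(p(\mathbf{x})\land\widehat p(\mathbf{x}))$ and $\forall\mathbf{x}\neg(\neg p(\mathbf{x})\land\neg\widehat p(\mathbf{x}))$. Entailment is in first-order intuitionistic logic. *)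

theory Defs
  imports Main
begin

datatype 'f trm = Var nat | Fn 'f "'f trm list"

datatype ('f, 'p) fm =
    FF
  | Pred 'p "'f trm list"
  | Conj "('f, 'p) fm" "('f, 'p) fm"
  | Disj "('f, 'p) fm" "('f, 'p) fm"
  | Imp "('f, 'p) fm" "('f, 'p) fm"
  | All "('f, 'p) fm"
  | Ex "('f, 'p) fm"

definition Neg :: "('f, 'p) fm \<Rightarrow> ('f, 'p) fm" where
  "Neg A = Imp A FF"

definition TT :: "('f, 'p) fm" where
  "TT = Imp FF FF"

definition Iff :: "('f, 'p) fm \<Rightarrow> ('f, 'p) fm \<Rightarrow> ('f, 'p) fm" where
  "Iff A B = Conj (Imp A B) (Imp B A)"

primrec liftt :: "'f trm \<Rightarrow> nat \<Rightarrow> 'f trm"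
  and liftts :: "'f trm list \<Rightarrow> nat \<Rightarrow> 'f trm list" where
  "liftt (Var i) k = (if i < k then Var i else Var (Suc i))"
| "liftt (Fn f ts) k = Fn f (liftts ts k)"
| "liftts [] k = []"
| "liftts (t # ts) k = liftt t k # liftts ts k"

primrec liftf :: "('f, 'p) fm \<Rightarrow> nat \<Rightarrow> ('f, 'p) fm" where
  "liftf FF k = FF"
| "liftf (Pred p ts) k = Pred p (liftts ts k)"
| "liftf (Conj A B) k = Conj (liftf A k) (liftf B k)"
| "liftf (Disj A B) k = Disj (liftf A k) (liftf B k)"
| "liftf (Imp A B) k = Imp (liftf A k) (liftf B k)"
| "liftf (All A) k = All (liftf A (Suc k))"
| "liftf (Ex A) k = Ex (liftf A (Suc k))"

primrec substt :: "'f trm \<Rightarrow> nat \<Rightarrow> 'f trm \<Rightarrow> 'f trm"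
  and substts :: "'f trm list \<Rightarrow> nat \<Rightarrow> 'f trm \<Rightarrow> 'f trm list" where
  "substt (Var i) k s = (if i < k then Var i else if i = k then s else Var (i - 1))"
| "substt (Fn f ts) k s = Fn f (substts ts k s)"
| "substts [] k s = []"
| "substts (t # ts) k s = substt t k s # substts ts k s"

primrec substf :: "('f, 'p) fm \<Rightarrow> nat \<Rightarrow> 'f trm \<Rightarrow> ('f, 'p) fm" where
  "substf FF k s = FF"
| "substf (Pred p ts) k s = Pred p (substts ts k s)"
| "substf (Conj A B) k s = Conj (substf A k s) (substf B k s)"
| "substf (Disj A B) k s = Disj (substf A k s) (substf B k s)"
| "substf (Imp A B) k s = Imp (substf A k s) (substf B k s)"
| "substf (All A) k s = All (substf A (Suc k) (liftt s 0))"
| "substf (Ex A) k s = Ex (substf A (Suc k) (liftt s 0))"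

primrec fvt :: "'f trm \<Rightarrow> nat set"
  and fvts :: "'f trm list \<Rightarrow> nat set" where
  "fvt (Var i) = {i}"
| "fvt (Fn f ts) = fvts ts"
| "fvts [] = {}"
| "fvts (t # ts) = fvt t \<union> fvts ts"

primrec fvf :: "('f, 'p) fm \<Rightarrow> nat set" where
  "fvf FF = {}"
| "fvf (Pred p ts) = fvts ts"
| "fvf (Conj A B) = fvf A \<union> fvf B"
| "fvf (Disj A B) = fvf A \<union> fvf B"
| "fvf (Imp A B) = fvf A \<union> fvf B"
| "fvf (All A) = {i. Suc i \<in> fvf A}"
| "fvf (Ex A) = {i. Suc i \<in> fvf A}"

definition uclosure :: "('f, 'p) fm \<Rightarrow> ('f, 'p) fm" where
  "uclosure A = (All ^^ (if fvf A = {} then 0 else Suc (Max (fvf A)))) A"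

primrec preds :: "('f, 'p) fm \<Rightarrow> 'p set" where
  "preds FF = {}"
| "preds (Pred p ts) = {p}"
| "preds (Conj A B) = preds A \<union> preds B"
| "preds (Disj A B) = preds A \<union> preds B"
| "preds (Imp A B) = preds A \<union> preds B"
| "preds (All A) = preds A"
| "preds (Ex A) = preds A"

primrec noimp :: "('f, 'p) fm \<Rightarrow> bool" where
  "noimp FF = True"
| "noimp (Pred p ts) = True"
| "noimp (Conj A B) = (noimp A \<and> noimp B)"
| "noimp (Disj A B) = (noimp A \<and> noimp B)"
| "noimp (Imp A B) = False"
| "noimp (All A) = noimp A"
| "noimp (Ex A) = noimp A"

inductive ideriv :: "('f, 'p) fm list \<Rightarrow> ('f, 'p) fm \<Rightarrow> bool" (infix "\<turnstile>i" 50) where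
  Assum: "A \<in> set G \<Longrightarrow> G \<turnstile>i A"
| FFE: "G \<turnstile>i FF \<Longrightarrow> G \<turnstile>i A"
| ImpI: "A # G \<turnstile>i B \<Longrightarrow> G \<turnstile>i Imp A B"
| ImpE: "G \<turnstile>i Imp A B \<Longrightarrow> G \<turnstile>i A \<Longrightarrow> G \<turnstile>i B"
| ConjI: "G \<turnstile>i A \<Longrightarrow> G \<turnstile>i B \<Longrightarrow> G \<turnstile>i Conj A B"
| ConjE1: "G \<turnstile>i Conj A B \<Longrightarrow> G \<turnstile>i A"
| ConjE2: "G \<turnstile>i Conj A B \<Longrightarrow> G \<turnstile>i B"
| DisjI1: "G \<turnstile>i A \<Longrightarrow> G \<turnstile>i Disj A B"
| DisjI2: "G \<turnstile>i B \<Longrightarrow> G \<turnstile>i Disj A B"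
| DisjE: "G \<turnstile>i Disj A B \<Longrightarrow> A # G \<turnstile>i C \<Longrightarrow> B # G \<turnstile>i C \<Longrightarrow> G \<turnstile>i C"
| AllI: "map (\<lambda>F. liftf F 0) G \<turnstile>i A \<Longrightarrow> G \<turnstile>i All A"
| AllE: "G \<turnstile>i All A \<Longrightarrow> G \<turnstile>i substf A 0 t"
| ExI: "G \<turnstile>i substf A 0 t \<Longrightarrow> G \<turnstile>i Ex A"
| ExE: "G \<turnstile>i Ex A \<Longrightarrow> A # map (\<lambda>F. liftf F 0) G \<turnstile>i liftf C 0 \<Longrightarrow> G \<turnstile>i C"

datatype 'p ext = Orig 'p | Hat 'p

datatype ('f, 'p) lit = PosL 'p "'f trm list" | NegL 'p "'f trm list"

text \<open>An L-rule  L \<Leftarrow> G  is represented as the pair (L, G).\<close>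

definition is_Lrule ::
  "('p \<Rightarrow> nat) \<Rightarrow> 'p list \<Rightarrow> ('f, 'p) lit \<times> ('f, 'p ext) fm \<Rightarrow> bool" where
  "is_Lrule ar ps R = (case R of (L, G) \<Rightarrow>
     noimp G \<and> preds G \<subseteq> range Orig \<and>
     (case L of PosL p ts \<Rightarrow> p \<in> set ps \<and> length ts = ar p
              | NegL p ts \<Rightarrow> p \<in> set ps \<and> length ts = ar p))"

fun tr_l :: "('f, 'p) lit \<times> ('f, 'p ext) fm \<Rightarrow> ('f, 'p ext) fm" where
  "tr_l (PosL p ts, G) = uclosure (Imp (Neg (Neg G)) (Pred (Orig p) ts))"
| "tr_l (NegL p ts, G) = uclosure (Imp (Neg (Neg G)) (Pred (Hat p) ts))"

fun tr_d :: "('f, 'p) lit \<times> ('f, 'p ext) fm \<Rightarrow> ('f, 'p ext) fm" where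
  "tr_d (PosL p ts, G) = uclosure (Imp (Conj (Neg (Neg G))
        (Disj (Pred (Hat p) ts) (Neg (Pred (Hat p) ts)))) (Pred (Orig p) ts))"
| "tr_d (NegL p ts, G) = uclosure (Imp (Conj (Neg (Neg G))
        (Disj (Pred (Orig p) ts) (Neg (Pred (Orig p) ts)))) (Pred (Hat p) ts))"

definition CC1 :: "('p \<Rightarrow> nat) \<Rightarrow> 'p \<Rightarrow> ('f, 'p ext) fm" where
  "CC1 ar p = (let xs = map Var [0..<ar p] in
     Conj ((All ^^ ar p) (Neg (Conj (Pred (Orig p) xs) (Pred (Hat p) xs))))
          ((All ^^ ar p) (Neg (Conj (Neg (Pred (Orig p) xs)) (Neg (Pred (Hat p) xs))))))"

definition CC :: "('p \<Rightarrow> nat) \<Rightarrow> 'p list \<Rightarrow> ('f, 'p ext) fm" where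
  "CC ar ps = foldr (\<lambda>p A. Conj (CC1 ar p) A) ps TT"

end

theory Submission
  imports Defs
begin

text \<open>Only the first completeness constraint, \<open>\<not>(p(x) \<and> \<hat>p(x))\<close>, is needed.
  Under \<open>\<not>(A \<and> B)\<close> the extra hypothesis \<open>B \<or> \<not>B\<close> of the D-rule translation is
  redundant: given \<open>\<not>\<not>G\<close>, assuming \<open>B\<close> yields \<open>B \<or> \<not>B\<close>, hence the head \<open>A\<close>, contradicting
  \<open>\<not>(A \<and> B)\<close>; so \<open>\<not>B\<close> holds, which again gives \<open>B \<or> \<not>B\<close>. Both implications have the
  same free variables, and the constraints are closed, so the equivalence survives the
  universal closure.\<close>

lemma ideriv_weaken: "G \<turnstile>i A \<Longrightarrow> set G \<subseteq> set G' \<Longrightarrow> G' \<turnstile>i A"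
proof (induction arbitrary: G' rule: ideriv.induct)
  case (ImpI A G B)
  then show ?case by (intro ideriv.ImpI ImpI.IH) auto
next
  case (DisjE G A B C)
  show ?case
    by (rule ideriv.DisjE[OF DisjE.IH(1) DisjE.IH(2,3)]) (use DisjE.prems in auto)
next
  case (AllI G A)
  then show ?case by (intro ideriv.AllI AllI.IH) auto
next
  case (ExE G A C)
  show ?case
    by (rule ideriv.ExE[OF ExE.IH(1) ExE.IH(2)]) (use ExE.prems in auto)
qed (meson ideriv.intros subsetD)+

lemma Assum_head: "A # G \<turnstile>i A"
  by (simp add: ideriv.Assum)

lemma liftts_eq_map: "liftts ts k = map (\<lambda>t. liftt t k) ts"
  by (induction ts) auto

lemma substts_eq_map: "substts ts k s = map (\<lambda>t. substt t k s) ts"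
  by (induction ts) auto

lemma substt_liftt: "substt (liftt t k) k u = t"
  by (induction t) (auto simp: liftts_eq_map substts_eq_map map_idI)

lemma substt_liftt_Suc_Var: "substt (liftt t (Suc k)) k (Var k) = t"
  by (induction t) (auto simp: liftts_eq_map substts_eq_map map_idI)

lemma substf_liftf_Suc_Var: "substf (liftf A (Suc k)) k (Var k) = A"
  by (induction A arbitrary: k)
    (auto simp: liftts_eq_map substts_eq_map substt_liftt_Suc_Var map_idI)

lemma liftt_liftt: "i \<le> j \<Longrightarrow> liftt (liftt t j) i = liftt (liftt t i) (Suc j)"
  by (induction t) (auto simp: liftts_eq_map)

definition liftn :: "nat \<Rightarrow> 'f trm \<Rightarrow> 'f trm" where
  "liftn j s = ((\<lambda>t. liftt t 0) ^^ j) s"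

lemma liftn_0 [simp]: "liftn 0 s = s"
  by (simp add: liftn_def)

lemma liftn_Suc: "liftn (Suc j) s = liftt (liftn j s) 0"
  by (simp add: liftn_def)

lemma liftn_liftt: "liftn j (liftt s 0) = liftn (Suc j) s"
  by (simp add: liftn_def funpow_Suc_right del: funpow.simps)

lemma liftn_Suc_liftt: "k \<le> j \<Longrightarrow> liftn (Suc j) s = liftt (liftn j s) k"
proof (induction j arbitrary: k)
  case 0
  then show ?case by (simp add: liftn_Suc)
next
  case (Suc j)
  show ?case
  proof (cases k)
    case (Suc k')
    with Suc.prems have "k' \<le> j" by simp
    have "liftn (Suc (Suc j)) s = liftt (liftt (liftn j s) k') 0"
      using Suc.IH[OF \<open>k' \<le> j\<close>] Suc.IH[of 0] by (simp add: liftn_Suc)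
    also have "\<dots> = liftt (liftt (liftn j s) 0) (Suc k')"
      by (rule liftt_liftt) simp
    finally show ?thesis
      using \<open>k = Suc k'\<close> by (simp add: liftn_Suc)
  qed (simp add: liftn_Suc)
qed

lemma substt_liftn_Suc: "k \<le> j \<Longrightarrow> substt (liftn (Suc j) s) k u = liftn j s"
  by (simp add: liftn_Suc_liftt substt_liftt)

lemma substf_All_funpow:
  "substf ((All ^^ j) A) k s = (All ^^ j) (substf A (k + j) (liftn j s))"
  by (induction j arbitrary: k s) (simp_all add: liftn_liftt)

lemma liftf_All_funpow: "liftf ((All ^^ j) A) k = (All ^^ j) (liftf A (k + j))"
  by (induction j arbitrary: k) auto

text \<open>Eliminating the \<open>m\<close> outermost quantifiers one at a time: after \<open>m - j\<close> steps the
  variables \<open>i \<ge> j\<close> have been replaced by \<open>ts ! i\<close>, lifted under the \<open>j\<close> remaining binders.\<close>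

lemma AllE_funpow:
  assumes F_subst: "\<And>us k s. substf (F us) k s = F (substts us k s)"
    and G_All: "G \<turnstile>i (All ^^ length ts) (F (map Var [0..<length ts]))"
  shows "G \<turnstile>i F ts"
proof -
  let ?m = "length ts"
  define \<sigma> where "\<sigma> j i = (if i < j then Var i else liftn j (ts ! i))" for j i
  have "G \<turnstile>i (All ^^ j) (F (map (\<sigma> j) [0..<?m]))" if "j \<le> ?m" for j
    using that
  proof (induction j rule: inc_induct)
    case base
    have "map (\<sigma> ?m) [0..<?m] = map Var [0..<?m]"
      by (simp add: \<sigma>_def)
    with G_All show ?case by metis
  next
    case (step n)
    then have "G \<turnstile>i All ((All ^^ n) (F (map (\<sigma> (Suc n)) [0..<?m])))"
      by simp
    then have "G \<turnstile>i substf ((All ^^ n) (F (map (\<sigma> (Suc n)) [0..<?m]))) 0 (ts ! n)"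
      by (rule ideriv.AllE)
    moreover have "map (\<lambda>i. substt (\<sigma> (Suc n) i) n (liftn n (ts ! n))) [0..<?m]
        = map (\<sigma> n) [0..<?m]"
      by (auto simp: \<sigma>_def substt_liftn_Suc less_Suc_eq)
    ultimately show ?case
      by (simp add: substf_All_funpow F_subst substts_eq_map comp_def)
  qed
  moreover have "map (\<sigma> 0) [0..<?m] = ts"
    by (rule nth_equalityI) (simp_all add: \<sigma>_def)
  ultimately show ?thesis by (metis le0 funpow_0)
qed

lemma imp_All_mono:
  assumes "map (\<lambda>F. liftf F 0) G \<turnstile>i Imp A B"
  shows "G \<turnstile>i Imp (All A) (All B)"
proof -
  let ?G = "All (liftf A 1) # map (\<lambda>F. liftf F 0) G"
  have "?G \<turnstile>i substf (liftf A 1) 0 (Var 0)"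
    by (rule ideriv.AllE) (rule Assum_head)
  then have "?G \<turnstile>i A"
    by (simp add: substf_liftf_Suc_Var[of A 0, simplified])
  moreover have "?G \<turnstile>i Imp A B"
    using assms by (rule ideriv_weaken) auto
  ultimately have "map (\<lambda>F. liftf F 0) (All A # G) \<turnstile>i B"
    by (simp add: ideriv.ImpE)
  then show ?thesis
    by (intro ideriv.ImpI ideriv.AllI)
qed

lemma Iff_All_funpow:
  assumes closed: "map (\<lambda>F. liftf F 0) G = G" and "G \<turnstile>i Iff A B"
  shows "G \<turnstile>i Iff ((All ^^ n) A) ((All ^^ n) B)"
proof (induction n)
  case 0
  then show ?case using assms(2) by simp
next
  case (Suc n)
  then show ?case
    unfolding Iff_def funpow.simps comp_def
    by (metis closed imp_All_mono ideriv.ConjE1 ideriv.ConjE2 ideriv.ConjI)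
qed

lemma Iff_uclosure:
  assumes "map (\<lambda>F. liftf F 0) G = G" and "fvf A = fvf B" and "G \<turnstile>i Iff A B"
  shows "G \<turnstile>i Iff (uclosure A) (uclosure B)"
  unfolding uclosure_def assms(2) using assms(1,3) by (rule Iff_All_funpow)

lemma CC_conjunct: "G \<turnstile>i CC ar ps \<Longrightarrow> p \<in> set ps \<Longrightarrow> G \<turnstile>i CC1 ar p"
  by (induction ps) (auto simp: CC_def intro: ideriv.ConjE1 ideriv.ConjE2)

lemma CC_not_both:
  assumes "G \<turnstile>i CC ar ps" and "p \<in> set ps" and "length ts = ar p"
  shows "G \<turnstile>i Neg (Conj (Pred (Orig p) ts) (Pred (Hat p) ts))"
proof (rule AllE_funpow[where F = "\<lambda>us. Neg (Conj (Pred (Orig p) us) (Pred (Hat p) us))"])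
  show "G \<turnstile>i (All ^^ length ts)
      (Neg (Conj (Pred (Orig p) (map Var [0..<length ts])) (Pred (Hat p) (map Var [0..<length ts]))))"
    using CC_conjunct[OF assms(1,2)] assms(3)
    by (simp add: CC1_def Let_def) (rule ideriv.ConjE1)
qed (simp add: Neg_def)

lemma liftf_CC: "liftf (CC ar ps) 0 = CC ar ps"
proof (induction ps)
  case Nil
  then show ?case by (simp add: CC_def TT_def)
next
  case (Cons q ps)
  have Vars_closed: "liftts (map Var [0..<m]) m = map Var [0..<m]" for m :: nat
    by (simp add: liftts_eq_map map_idI)
  have "liftf (CC1 ar q) 0 = CC1 ar q"
    by (simp add: CC1_def Let_def liftf_All_funpow Neg_def Vars_closed del: liftts.simps)
  with Cons show ?case by (simp add: CC_def)
qed

lemma Iff_excluded_middle_redundant: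
  assumes excl: "\<Gamma> \<turnstile>i Neg (Conj A B)"
  shows "\<Gamma> \<turnstile>i Iff (Imp N A) (Imp (Conj N (Disj B (Neg B))) A)"
proof -
  let ?EM = "Disj B (Neg B)"
  have forget_EM: "Imp N A # \<Gamma> \<turnstile>i Imp (Conj N ?EM) A"
  proof (rule ideriv.ImpI)
    have "Conj N ?EM # Imp N A # \<Gamma> \<turnstile>i N"
      by (rule ideriv.ConjE1) (rule Assum_head)
    then show "Conj N ?EM # Imp N A # \<Gamma> \<turnstile>i A"
      by (rule ideriv.ImpE[rotated]) (simp add: ideriv.Assum)
  qed
  let ?\<Gamma> = "N # Imp (Conj N ?EM) A # \<Gamma>"
  have D_imp: "?\<Gamma> \<turnstile>i Imp (Conj N ?EM) A"
    by (simp add: ideriv.Assum)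
  have "B # ?\<Gamma> \<turnstile>i FF"
  proof -
    have "B # ?\<Gamma> \<turnstile>i Conj N ?EM"
      by (intro ideriv.ConjI ideriv.DisjI1) (simp_all add: ideriv.Assum)
    moreover have "B # ?\<Gamma> \<turnstile>i Imp (Conj N ?EM) A"
      by (simp add: ideriv.Assum)
    ultimately have "B # ?\<Gamma> \<turnstile>i Conj A B"
      by (intro ideriv.ConjI Assum_head) (rule ideriv.ImpE)
    moreover have "B # ?\<Gamma> \<turnstile>i Neg (Conj A B)"
      using excl by (rule ideriv_weaken) auto
    ultimately show ?thesis
      unfolding Neg_def by (rule ideriv.ImpE[rotated])
  qed
  then have "?\<Gamma> \<turnstile>i Neg B"
    unfolding Neg_def by (rule ideriv.ImpI)
  then have "?\<Gamma> \<turnstile>i Conj N ?EM"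
    by (intro ideriv.ConjI ideriv.DisjI2 Assum_head)
  then have "?\<Gamma> \<turnstile>i A"
    by (rule ideriv.ImpE[OF D_imp])
  then have "\<Gamma> \<turnstile>i Imp (Imp (Conj N ?EM) A) (Imp N A)"
    by (intro ideriv.ImpI)
  moreover have "\<Gamma> \<turnstile>i Imp (Imp N A) (Imp (Conj N ?EM) A)"
    using forget_EM by (rule ideriv.ImpI)
  ultimately show ?thesis
    unfolding Iff_def by (rule ideriv.ConjI[rotated])
qed

lemma neg_conj_commute:
  assumes "\<Gamma> \<turnstile>i Neg (Conj A B)"
  shows "\<Gamma> \<turnstile>i Neg (Conj B A)"
  unfolding Neg_def
proof (rule ideriv.ImpI)
  have "Conj B A # \<Gamma> \<turnstile>i Conj A B"
    by (rule ideriv.ConjI; rule ideriv.ConjE2 ideriv.ConjE1; rule Assum_head)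
  moreover have "Conj B A # \<Gamma> \<turnstile>i Imp (Conj A B) FF"
    using assms unfolding Neg_def by (rule ideriv_weaken) auto
  ultimately show "Conj B A # \<Gamma> \<turnstile>i FF"
    by (rule ideriv.ImpE[rotated])
qed

theorem lemma10:
  fixes ar :: "'p \<Rightarrow> nat" and ps :: "'p list"
    and R :: "('f, 'p) lit \<times> ('f, 'p ext) fm"
  assumes "is_Lrule ar ps R"
  shows "[CC ar ps] \<turnstile>i Iff (tr_l R) (tr_d R)"
proof -
  obtain L G where R: "R = (L, G)" by (cases R)
  have closed: "map (\<lambda>F. liftf F 0) [CC ar ps] = [CC ar ps]"
    by (simp add: liftf_CC)
  have CC: "[CC ar ps] \<turnstile>i CC ar ps"
    by (simp add: ideriv.Assum)
  show ?thesis
  proof (cases L)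
    case (PosL p ts)
    with assms R have "[CC ar ps] \<turnstile>i Neg (Conj (Pred (Orig p) ts) (Pred (Hat p) ts))"
      by (simp add: is_Lrule_def CC_not_both[OF CC])
    from Iff_excluded_middle_redundant[OF this] show ?thesis
      unfolding R PosL tr_l.simps tr_d.simps
      by (rule Iff_uclosure[OF closed, rotated]) (auto simp: Neg_def)
  next
    case (NegL p ts)
    with assms R have "[CC ar ps] \<turnstile>i Neg (Conj (Pred (Hat p) ts) (Pred (Orig p) ts))"
      by (simp add: is_Lrule_def CC_not_both[OF CC] neg_conj_commute)
    from Iff_excluded_middle_redundant[OF this] show ?thesis
      unfolding R NegL tr_l.simps tr_d.simps
      by (rule Iff_uclosure[OF closed, rotated]) (auto simp: Neg_def)
  qed
qed

end
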